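(* Consider one-dimensional $L_2$-regularized linear regression trained by plain SGD with learning rate $\lambda>0$ and batch size $S$, with input variance $a>0$, target $u$ and weight decay $\gamma$, and write $k:=a+\gamma$ (assume $k\neq0$ and $2k-\lambda[k^2+\frac2Sa^2]\neq0$). Then the expected training loss and test loss are $$L_{\rm train}=\frac{a\gamma}{2k}\cdot\frac{2k-\lambda\left[k^2+\frac2Sa(a-\gamma)\right]}{2k-\lambda\left[k^2+\frac2Sa^2\right]}u^2,\qquad L_{\rm test}=\frac{a\gamma^2}{2k}\cdot\frac{2-\lambda k}{2k-\lambda\left[k^2+\frac2Sa^2\right]}u^2.$$
   Context: Loss (as $N\to\infty$): $L_\Gamma(w)=\frac12a(w-u)^2+\frac12\gamma w^2$, with data $x\sim\mathcal N(0,a)$ and labels $y=ux$. The stationary distribution of $w$ has mean $w^*=au/k$ and variance $\Sigma$ determined by $\lambda\cdot2k\Sigma-\lambda^2k^2\Sigma=\lambda^2C$, where the averaged minibatch noise variance is $C=\frac1S\left(2a^2\Sigma+\frac{2a^2\gamma^2u^2}{k^2}\right)$. $L_{\rm train}:=\mathbb{E}_w[L_\Gamma(w)]$ and $L_{\rm test}:=\frac12a\,\mathbb{E}_w[(w-u)^2]$. *)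

theory Defs
  imports "HOL-Probability.Probability"
begin

definition L_Gamma :: "real \<Rightarrow> real \<Rightarrow> real \<Rightarrow> real \<Rightarrow> real" where
  "L_Gamma a u \<gamma> w = 1/2 * a * (w - u)^2 + 1/2 * \<gamma> * w^2"

definition noise_C :: "nat \<Rightarrow> real \<Rightarrow> real \<Rightarrow> real \<Rightarrow> real \<Rightarrow> real \<Rightarrow> real" where
  "noise_C S a u \<gamma> k \<Sigma> = 1 / real S * (2 * a^2 * \<Sigma> + 2 * a^2 * \<gamma>^2 * u^2 / k^2)"

end

theory Submission
  imports Defs
begin

(*
  By the bias-variance decomposition E[(w - c)^2] = \<Sigma> + (E w - c)^2 both losses are affine in \<Sigma>,
  with E w - u = -\<gamma>u/k and E w = au/k. The stationarity condition is linear in \<Sigma>: dividing it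
  by the learning rate \<lambda> gives \<Sigma> D = 2\<lambda>a^2\<gamma>^2u^2/(Sk^2) with D = 2k - \<lambda>(k^2 + 2a^2/S),
  and substituting this into the two affine expressions yields the closed forms.
*)

lemma (in prob_space) expectation_square_diff:
  fixes X :: "'a \<Rightarrow> real"
  assumes "X \<in> borel_measurable M" and "integrable M (\<lambda>x. (X x)^2)"
  shows "expectation (\<lambda>x. (X x - c)^2) = variance X + (expectation X - c)^2"
proof -
  have [simp]: "integrable M X"
    using square_integrable_imp_integrable[OF assms] .
  have [simp]: "integrable M (\<lambda>x. (X x)^2)"
    by fact
  have "expectation (\<lambda>x. (X x - c)^2) = expectation (\<lambda>x. (X x)^2) - 2 * c * expectation X + c^2"
    by (simp add: power2_diff prob_space)
  also have "\<dots> = (expectation (\<lambda>x. (X x)^2) - (expectation X)^2) + (expectation X - c)^2"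
    by (simp add: power2_diff)
  also have "expectation (\<lambda>x. (X x)^2) - (expectation X)^2 = variance X"
    by (rule variance_eq[symmetric]) simp_all
  finally show ?thesis .
qed

lemma (in prob_space) expectation_L_Gamma:
  fixes X :: "'a \<Rightarrow> real"
  assumes "X \<in> borel_measurable M" and "integrable M (\<lambda>x. (X x)^2)"
  shows "expectation (\<lambda>x. L_Gamma a u \<gamma> (X x))
    = a / 2 * (variance X + (expectation X - u)^2) + \<gamma> / 2 * (variance X + (expectation X)^2)"
proof -
  have "integrable M X"
    using square_integrable_imp_integrable[OF assms] .
  then have "integrable M (\<lambda>x. (X x - u)^2)"
    using assms(2) by (simp add: power2_diff)
  have "expectation (\<lambda>x. L_Gamma a u \<gamma> (X x))
      = expectation (\<lambda>x. a / 2 * (X x - u)^2 + \<gamma> / 2 * (X x)^2)"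
    by (simp add: L_Gamma_def)
  also have "\<dots> = a / 2 * expectation (\<lambda>x. (X x - u)^2) + \<gamma> / 2 * expectation (\<lambda>x. (X x)^2)"
    using \<open>integrable M (\<lambda>x. (X x - u)^2)\<close> assms(2) by (subst Bochner_Integration.integral_add) auto
  also have "expectation (\<lambda>x. (X x)^2) = variance X + (expectation X)^2"
    using expectation_square_diff[OF assms, of 0] by (simp only: diff_0_right)
  finally show ?thesis
    by (simp only: expectation_square_diff[OF assms, of u])
qed

lemma stationary_variance_eq:
  fixes lr a u \<gamma> k \<Sigma> :: real and S :: nat
  assumes "lr \<noteq> 0" and "k \<noteq> 0" and "S > 0"
    and sigma_eq: "lr * 2 * k * \<Sigma> - lr^2 * k^2 * \<Sigma> = lr^2 * noise_C S a u \<gamma> k \<Sigma>"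
  shows "\<Sigma> * (2*k - lr * (k^2 + 2 / real S * a^2)) = 2 * lr * a^2 * \<gamma>^2 * u^2 / (real S * k^2)"
    (is "_ = ?Z")
proof -
  have "lr * (\<Sigma> * (2*k - lr * k^2)) = lr * 2 * k * \<Sigma> - lr^2 * k^2 * \<Sigma>"
    by (simp add: algebra_simps power2_eq_square)
  also have "\<dots> = lr^2 * noise_C S a u \<gamma> k \<Sigma>"
    by (rule sigma_eq)
  also have "\<dots> = lr * (lr * (2 / real S * a^2) * \<Sigma> + ?Z)"
    unfolding noise_C_def using \<open>k \<noteq> 0\<close> \<open>S > 0\<close> by (simp add: field_simps power2_eq_square)
  finally have "\<Sigma> * (2*k - lr * k^2) = lr * (2 / real S * a^2) * \<Sigma> + ?Z"
    using \<open>lr \<noteq> 0\<close> by simp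
  then show ?thesis
    by (simp add: right_diff_distrib distrib_left mult_ac)
qed

lemma test_loss_closed_form:
  fixes lr a u \<gamma> k \<Sigma> D :: real and S :: nat
  assumes "real S > 0" and "k \<noteq> 0" and "D \<noteq> 0"
    and D: "D = 2*k - lr * (k^2 + 2 / real S * a^2)"
    and \<Sigma>: "\<Sigma> * D = 2 * lr * a^2 * \<gamma>^2 * u^2 / (real S * k^2)"
  shows "a / 2 * (\<Sigma> + (\<gamma> * u / k)^2) = a * \<gamma>^2 / (2 * k) * (2 - lr * k) / D * u^2"
proof -
  have "a / 2 * (\<Sigma> + (\<gamma> * u / k)^2) * D = a / 2 * (\<Sigma> * D + (\<gamma> * u / k)^2 * D)"
    by (simp add: algebra_simps)
  also have "\<dots> = a * \<gamma>^2 / (2 * k) * (2 - lr * k) * u^2"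
    unfolding \<Sigma> unfolding D using assms(1,2) by (simp add: field_simps power2_eq_square)
  finally show ?thesis
    using assms(3) by (simp only: times_divide_eq_left nonzero_eq_divide_eq not_False_eq_True)
qed

lemma train_loss_closed_form:
  fixes lr a u \<gamma> k \<Sigma> D :: real and S :: nat
  assumes "real S > 0" and "k \<noteq> 0" and "D \<noteq> 0" and "k = a + \<gamma>"
    and D: "D = 2*k - lr * (k^2 + 2 / real S * a^2)"
    and \<Sigma>: "\<Sigma> * D = 2 * lr * a^2 * \<gamma>^2 * u^2 / (real S * k^2)"
  shows "a / 2 * (\<Sigma> + (\<gamma> * u / k)^2) + \<gamma> / 2 * (\<Sigma> + (a * u / k)^2)
    = a * \<gamma> / (2 * k) * (2*k - lr * (k^2 + 2 / real S * a * (a - \<gamma>))) / D * u^2"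
proof -
  have "(a / 2 * (\<Sigma> + (\<gamma> * u / k)^2) + \<gamma> / 2 * (\<Sigma> + (a * u / k)^2)) * D
      = (a + \<gamma>) / 2 * (\<Sigma> * D) + a * \<gamma> * (a + \<gamma>) * u^2 / (2 * k^2) * D"
    using assms(2) by (simp add: field_simps power2_eq_square)
  also have "\<dots> = k / 2 * (\<Sigma> * D) + a * \<gamma> * u^2 / (2 * k) * D"
    using assms(2,4) by (simp add: power2_eq_square)
  also have "\<dots> = a * \<gamma> / (2 * k) * (2*k - lr * (k^2 + 2 / real S * a * (a - \<gamma>))) * u^2"
    unfolding \<Sigma> unfolding D using assms(1,2) by (simp add: field_simps power2_eq_square)
  finally show ?thesis
    using assms(3) by (simp only: times_divide_eq_left nonzero_eq_divide_eq not_False_eq_True)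
qed

theorem corollary2:
  fixes M :: "'s measure" and w :: "'s \<Rightarrow> real"
    and lr a u \<gamma> k \<Sigma> :: real and S :: nat
  assumes "prob_space M"
    and "w \<in> borel_measurable M"
    and "integrable M (\<lambda>x. (w x)^2)"
    and "lr > 0" and "S \<ge> 1" and "a > 0"
    and k_def: "k = a + \<gamma>" and "k \<noteq> 0"
    and "2*k - lr * (k^2 + 2 / real S * a^2) \<noteq> 0"
    and mean: "prob_space.expectation M w = a * u / k"
    and var: "prob_space.variance M w = \<Sigma>"
    and sigma_eq: "lr * 2 * k * \<Sigma> - lr^2 * k^2 * \<Sigma> = lr^2 * noise_C S a u \<gamma> k \<Sigma>"
  shows "(prob_space.expectation M (\<lambda>x. L_Gamma a u \<gamma> (w x))
           = a * \<gamma> / (2 * k) * (2*k - lr * (k^2 + 2 / real S * a * (a - \<gamma>)))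
             / (2*k - lr * (k^2 + 2 / real S * a^2)) * u^2) \<and>
         (prob_space.expectation M (\<lambda>x. 1/2 * a * (w x - u)^2)
           = a * \<gamma>^2 / (2 * k) * (2 - lr * k)
             / (2*k - lr * (k^2 + 2 / real S * a^2)) * u^2)"
proof -
  interpret prob_space M by fact
  have \<Sigma>: "\<Sigma> * (2*k - lr * (k^2 + 2 / real S * a^2)) = 2 * lr * a^2 * \<gamma>^2 * u^2 / (real S * k^2)"
    using stationary_variance_eq[OF _ \<open>k \<noteq> 0\<close> _ sigma_eq] \<open>lr > 0\<close> \<open>S \<ge> 1\<close> by simp
  have "expectation w - u = - (\<gamma> * u / k)"
    unfolding mean using k_def \<open>k \<noteq> 0\<close> by (simp add: field_simps)
  then have bias: "(expectation w - u)^2 = (\<gamma> * u / k)^2"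
    by simp
  have "real S > 0"
    using \<open>S \<ge> 1\<close> by simp
  have train: "expectation (\<lambda>x. L_Gamma a u \<gamma> (w x))
      = a * \<gamma> / (2 * k) * (2*k - lr * (k^2 + 2 / real S * a * (a - \<gamma>)))
        / (2*k - lr * (k^2 + 2 / real S * a^2)) * u^2"
    using expectation_L_Gamma[OF assms(2,3), of a u \<gamma>, unfolded var bias, unfolded mean]
      train_loss_closed_form[OF \<open>real S > 0\<close> \<open>k \<noteq> 0\<close> assms(9) k_def refl \<Sigma>]
    by (rule trans)
  have "expectation (\<lambda>x. 1/2 * a * (w x - u)^2) = a / 2 * expectation (\<lambda>x. (w x - u)^2)"
    by simp
  also have "\<dots> = a / 2 * (\<Sigma> + (\<gamma> * u / k)^2)"
    unfolding expectation_square_diff[OF assms(2,3), of u] var bias ..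
  also have "\<dots> = a * \<gamma>^2 / (2 * k) * (2 - lr * k) / (2*k - lr * (k^2 + 2 / real S * a^2)) * u^2"
    by (rule test_loss_closed_form[OF \<open>real S > 0\<close> \<open>k \<noteq> 0\<close> assms(9) refl \<Sigma>])
  finally show ?thesis
    by (rule conjI[OF train])
qed

end
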